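(* Let $S$ be a semigroup of skew type with generating set $X=\{x_1,\ldots,x_n\}$, and assume $S$ satisfies the cyclic condition (C). Then $S$ satisfies the full cyclic condition (FC): for any $x,y\in X$ there exist sequences $x=z_1,z_2,\ldots,z_k$ and $y=y_1,y_2,\ldots,y_p$ of elements of $X$ such that, in $S$, $$y_j z_i = z_{i+1}\, y_{j+1}\quad\text{for all } 1\le i\le k,\ 1\le j\le p,$$ where indices of the $z$'s are read modulo $k$ (so $z_{k+1}=z_1$) and indices of the $y$'s modulo $p$ (so $y_{p+1}=y_1$).
   Context: A semigroup of skew type is a monoid $S$ with a monoid presentation $S=\langle x_1,\ldots,x_n \mid x_ix_j=x_kx_l\rangle$ consisting of $\binom{n}{2}$ relations, each of the form $x_ix_j=x_kx_l$ with $i\neq j$, $k\neq l$, such that every word $x_px_q$ with $p\neq q$ appears (as one side) in exactly one of the relations. We write $X=\{x_1,\ldots,x_n\}$ and use the same symbols for the generators in $S$. $S$ satisfies the cyclic condition (C) if for every pair $x,y\in X$ there exist elements $x=z_1,z_2,\ldots,z_k$ and $y'$ in $X$ such that in $S$: $yz_1=z_2y'$, $yz_2=z_3y'$, $\ldots$, $yz_{k-1}=z_ky'$, $yz_k=xy'$. *)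

theory Defs
  imports Main
begin

(* A monoid presentation with generating set X (elements of type 'a) and a set R of
   defining relations, each relation ((a,b),(c,d)) standing for  a b = c d .
   Elements of the monoid S are words (lists over X) modulo the congruence
   generated by R. *)

inductive pres_eq :: "(('a \<times> 'a) \<times> ('a \<times> 'a)) set \<Rightarrow> 'a list \<Rightarrow> 'a list \<Rightarrow> bool"
  for R where
  refl: "pres_eq R u u"
| sym: "pres_eq R u v \<Longrightarrow> pres_eq R v u"
| trans: "pres_eq R u v \<Longrightarrow> pres_eq R v w \<Longrightarrow> pres_eq R u w"
| rel: "((a, b), (c, d)) \<in> R \<Longrightarrow> pres_eq R (u @ [a, b] @ v) (u @ [c, d] @ v)"

definition skew_type :: "'a set \<Rightarrow> (('a \<times> 'a) \<times> ('a \<times> 'a)) set \<Rightarrow> bool" where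
  "skew_type X R \<longleftrightarrow>
     finite X \<and> finite R \<and> card R = card X choose 2 \<and>
     (\<forall>((a, b), (c, d)) \<in> R. a \<in> X \<and> b \<in> X \<and> c \<in> X \<and> d \<in> X \<and> a \<noteq> b \<and> c \<noteq> d) \<and>
     (\<forall>p\<in>X. \<forall>q\<in>X. p \<noteq> q \<longrightarrow> (\<exists>!r. r \<in> R \<and> (fst r = (p, q) \<or> snd r = (p, q))))"

(* Cyclic condition (C); indices 0-based, z 0 = x, and z_{k} read as z_0 = x. *)
definition cyclic_C :: "'a set \<Rightarrow> (('a \<times> 'a) \<times> ('a \<times> 'a)) set \<Rightarrow> bool" where
  "cyclic_C X R \<longleftrightarrow>
     (\<forall>x\<in>X. \<forall>y\<in>X. \<exists>k::nat. \<exists>z::nat \<Rightarrow> 'a. \<exists>y'\<in>X.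
        k \<ge> 1 \<and> z 0 = x \<and> (\<forall>i<k. z i \<in> X) \<and>
        (\<forall>i<k. pres_eq R [y, z i] [z (Suc i mod k), y']))"

definition full_cyclic_FC :: "'a set \<Rightarrow> (('a \<times> 'a) \<times> ('a \<times> 'a)) set \<Rightarrow> bool" where
  "full_cyclic_FC X R \<longleftrightarrow>
     (\<forall>x\<in>X. \<forall>y\<in>X. \<exists>k p::nat. \<exists>z w::nat \<Rightarrow> 'a.
        k \<ge> 1 \<and> p \<ge> 1 \<and> z 0 = x \<and> w 0 = y \<and>
        (\<forall>i<k. z i \<in> X) \<and> (\<forall>j<p. w j \<in> X) \<and>
        (\<forall>i<k. \<forall>j<p. pres_eq R [w j, z i] [z (Suc i mod k), w (Suc j mod p)]))"

end

theory Submission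
  imports Defs
begin

text \<open>In a presentation of skew type the only words of length two equal to \<open>a b\<close> in \<open>S\<close> are
  \<open>a b\<close> itself and the other side \<open>\<sigma>(a, b)\<close> of the unique relation containing it, so everything
  can be phrased with the involution \<open>\<sigma> = (l, r)\<close> of \<open>X \<times> X\<close>. Condition (C) says that
  iterating \<open>l(y, -)\<close> from \<open>x\<close> runs through a cycle \<open>z\<close> along which \<open>r(y, z\<^sub>i)\<close> is a constant
  \<open>y'\<close>. If some \<open>w\<close> has this property for the cycle \<open>z\<close>, then so does \<open>w' = r(w, x)\<close>: (C) gives
  \<open>l(c, r(a, c)) = a\<close> in general, hence \<open>l(w', z\<^sub>i) = z\<^sub>i\<^sub>+\<^sub>1\<close>, and (C) for the pair \<open>(x, w')\<close> makes
  \<open>r(w', z\<^sub>i)\<close> constant. As \<open>w \<mapsto> r(w, x)\<close> is injective on the finite set of such \<open>w\<close>, its orbit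
  through \<open>y\<close> is periodic, and it is the sequence \<open>y\<^sub>j\<close> of (FC).\<close>

definition relates :: "(('a \<times> 'a) \<times> ('a \<times> 'a)) set \<Rightarrow> 'a \<times> 'a \<Rightarrow> 'a \<times> 'a \<Rightarrow> bool" where
  "relates R p q \<longleftrightarrow> (p, q) \<in> R \<or> (q, p) \<in> R"

definition skew_swap :: "(('a \<times> 'a) \<times> ('a \<times> 'a)) set \<Rightarrow> 'a \<times> 'a \<Rightarrow> 'a \<times> 'a" where
  "skew_swap R p = (if \<exists>q. relates R p q then THE q. relates R p q else p)"

lemma relates_sym: "relates R p q \<Longrightarrow> relates R q p"
  by (auto simp: relates_def)

lemma relates_mem:
  assumes "skew_type X R" "relates R (a, b) (c, d)"
  shows "a \<in> X" "b \<in> X" "a \<noteq> b" "c \<in> X" "d \<in> X" "c \<noteq> d"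
  using assms unfolding skew_type_def relates_def by fast+

lemma relates_unique:
  assumes sk: "skew_type X R" and "relates R p q" "relates R p r"
  shows "q = r"
proof -
  obtain a b where p: "p = (a, b)" by fastforce
  have "a \<in> X" "b \<in> X" "a \<noteq> b"
    using relates_mem[OF sk] assms(2) unfolding p by (metis prod.collapse)+
  then have "\<exists>!s. s \<in> R \<and> (fst s = p \<or> snd s = p)"
    using sk unfolding skew_type_def p by blast
  then show ?thesis
    using assms(2,3) unfolding relates_def by (metis fst_conv snd_conv prod.inject)
qed

lemma skew_swap_eqI: "skew_type X R \<Longrightarrow> relates R p q \<Longrightarrow> skew_swap R p = q"
  unfolding skew_swap_def using relates_unique by (metis (mono_tags, lifting) the_equality)

lemma skew_swap_unrelated: "\<not> (\<exists>q. relates R p q) \<Longrightarrow> skew_swap R p = p"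
  unfolding skew_swap_def by auto

lemma skew_swap_skew_swap [simp]:
  assumes "skew_type X R"
  shows "skew_swap R (skew_swap R p) = p"
  using skew_swap_eqI[OF assms] skew_swap_unrelated relates_sym by metis

lemma skew_swap_diag [simp]: "skew_type X R \<Longrightarrow> skew_swap R (a, a) = (a, a)"
  using relates_mem by (metis skew_swap_unrelated surj_pair)

lemma skew_swap_mem:
  assumes "skew_type X R" "a \<in> X" "b \<in> X"
  shows "skew_swap R (a, b) \<in> X \<times> X"
  using assms relates_mem skew_swap_eqI skew_swap_unrelated by (metis mem_Sigma_iff surj_pair)

lemma pres_eq_length2:
  assumes sk: "skew_type X R" and "pres_eq R u v"
  shows "length u = length v \<and>
    (\<forall>a b c d. u = [a, b] \<longrightarrow> v = [c, d] \<longrightarrow> (c, d) \<in> {(a, b), skew_swap R (a, b)})"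
  using assms(2)
proof (induction rule: pres_eq.induct)
  case (sym u v)
  then show ?case using skew_swap_skew_swap[OF sk] by (auto simp: length_Suc_conv)
next
  case (trans u v w)
  then show ?case using skew_swap_skew_swap[OF sk] by (auto simp: length_Suc_conv)
next
  case (rel a b c d u v)
  have "u = [] \<and> v = []" if "u @ [a, b] @ v = [a', b']" for a' b'
    using arg_cong[OF that, of length] by simp
  moreover have "skew_swap R (a, b) = (c, d)"
    using skew_swap_eqI[OF sk, of "(a, b)" "(c, d)"] rel unfolding relates_def by blast
  ultimately show ?case by auto
qed simp

lemma pres_eq_pair_iff:
  assumes sk: "skew_type X R"
  shows "pres_eq R [a, b] [c, d] \<longleftrightarrow> (c, d) = (a, b) \<or> (c, d) = skew_swap R (a, b)"
proof
  show "pres_eq R [a, b] [c, d] \<Longrightarrow> (c, d) = (a, b) \<or> (c, d) = skew_swap R (a, b)"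
    using pres_eq_length2[OF sk] by blast
next
  assume "(c, d) = (a, b) \<or> (c, d) = skew_swap R (a, b)"
  then have "(c, d) = (a, b) \<or> relates R (a, b) (c, d)"
    using skew_swap_eqI[OF sk] skew_swap_unrelated by metis
  then show "pres_eq R [a, b] [c, d]"
    using pres_eq.refl pres_eq.rel[of _ _ _ _ R "[]" "[]"] pres_eq.sym
    unfolding relates_def by fastforce
qed

definition swap_cycle ::
    "(('a \<times> 'a) \<times> ('a \<times> 'a)) set \<Rightarrow> 'a \<Rightarrow> nat \<Rightarrow> (nat \<Rightarrow> 'a) \<Rightarrow> 'a \<Rightarrow> bool" where
  "swap_cycle R y k z y' \<longleftrightarrow> (\<forall>i<k. skew_swap R (y, z i) = (z (Suc i mod k), y'))"

lemma cyclic_C_swap_cycle: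
  assumes sk: "skew_type X R" and "cyclic_C X R" "x \<in> X" "y \<in> X"
  obtains k z y' where "0 < k" "z 0 = x" "\<forall>i<k. z i \<in> X" "swap_cycle R y k z y'"
proof -
  obtain k z y' where "k \<ge> 1" "z 0 = x" "\<forall>i<k. z i \<in> X"
    and eq: "\<forall>i<k. pres_eq R [y, z i] [z (Suc i mod k), y']"
    using assms(2-4) unfolding cyclic_C_def by blast
  moreover from \<open>k \<ge> 1\<close> have k: "0 < k" by simp
  moreover have "skew_swap R (y, z i) = (z (Suc i mod k), y')" if i: "i < k" for i
  proof (rule ccontr)
    assume ne: "skew_swap R (y, z i) \<noteq> (z (Suc i mod k), y')"
    then have trivial: "(z (Suc i mod k), y') = (y, z i)"
      using eq i by (auto simp: pres_eq_pair_iff[OF sk])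
    with ne have "y \<noteq> z i"
      using skew_swap_diag[OF sk] by auto
    \<comment> \<open>then the next relation of the cycle starts with the square \<open>y y\<close>, forcing \<open>y' = y\<close>\<close>
    have "pres_eq R [y, z (Suc i mod k)] [z (Suc (Suc i mod k) mod k), y']"
      using eq k by simp
    then have "pres_eq R [y, y] [z (Suc (Suc i mod k) mod k), y']"
      using trivial by simp
    then have "y' = y"
      using pres_eq_pair_iff[OF sk] skew_swap_diag[OF sk] by auto
    with trivial \<open>y \<noteq> z i\<close> show False by simp
  qed
  ultimately show thesis using that unfolding swap_cycle_def by blast
qed

text \<open>The witness is the predecessor of \<open>c\<close> on the cycle of \<open>l(a, -)\<close> through \<open>c\<close>.\<close>

lemma fst_skew_swap_snd:
  assumes sk: "skew_type X R" and C: "cyclic_C X R" and "a \<in> X" "c \<in> X"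
  shows "fst (skew_swap R (c, snd (skew_swap R (a, c)))) = a"
proof -
  obtain k z v where k: "0 < k" and z0: "z 0 = c" and cyc: "swap_cycle R a k z v"
    using cyclic_C_swap_cycle[OF sk C \<open>c \<in> X\<close> \<open>a \<in> X\<close>] .
  have "skew_swap R (a, c) = (z (Suc 0 mod k), v)"
    using cyc k z0 unfolding swap_cycle_def by auto
  moreover have "skew_swap R (a, z (k - 1)) = (z (Suc (k - 1) mod k), v)"
    using cyc k unfolding swap_cycle_def by simp
  then have "skew_swap R (a, z (k - 1)) = (c, v)"
    using k z0 by simp
  then have "skew_swap R (c, v) = (a, z (k - 1))"
    using skew_swap_skew_swap[OF sk] by metis
  ultimately show ?thesis by simp
qed

lemma funpow_cycle:
  assumes "0 < k" and "\<forall>i<k. f (z i) = z (Suc i mod k)"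
  shows "(f ^^ m) (z 0) = z (m mod k)"
proof (induction m)
  case (Suc m)
  have "m mod k < k" using \<open>0 < k\<close> by simp
  with Suc assms(2) show ?case by (simp add: mod_Suc_eq)
qed simp

lemma swap_cycle_next:
  assumes sk: "skew_type X R" and C: "cyclic_C X R"
    and k: "0 < k" and zX: "\<forall>i<k. z i \<in> X" and "w' \<in> X" and cyc: "swap_cycle R w k z w'"
  shows "swap_cycle R w' k z (snd (skew_swap R (w', z 0)))"
proof -
  let ?f = "\<lambda>u. fst (skew_swap R (w', u))"
  have step: "\<forall>i<k. ?f (z i) = z (Suc i mod k)"
  proof (intro allI impI)
    fix i assume "i < k"
    have "skew_swap R (z (Suc i mod k), w') = (w, z i)"
      using cyc \<open>i < k\<close> skew_swap_skew_swap[OF sk] unfolding swap_cycle_def by metis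
    then show "?f (z i) = z (Suc i mod k)"
      using fst_skew_swap_snd[OF sk C _ \<open>w' \<in> X\<close>] zX k by (metis mod_less_divisor snd_conv)
  qed
  \<comment> \<open>condition (C) for the pair \<open>(z 0, w')\<close> yields another \<open>?f\<close>-cycle through \<open>z 0\<close>,
      which must traverse the same elements as \<open>z\<close>\<close>
  obtain k' z' s where k': "0 < k'" and z'0: "z' 0 = z 0" and cyc': "swap_cycle R w' k' z' s"
    using cyclic_C_swap_cycle[OF sk C _ \<open>w' \<in> X\<close>] zX k by (metis)
  have step': "\<forall>i<k'. ?f (z' i) = z' (Suc i mod k')"
    using cyc' unfolding swap_cycle_def by simp
  have "z i = z' (i mod k')" if "i < k" for i
    using funpow_cycle[OF k step, of i]
      funpow_cycle[OF k' step', of i] z'0 that by simp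
  then have "snd (skew_swap R (w', z i)) = s" if "i < k" for i
    using cyc' k' that unfolding swap_cycle_def by simp
  with step k show ?thesis
    unfolding swap_cycle_def by (metis prod.collapse)
qed

lemma funpow_periodic_if_inj_on:
  assumes "finite A" "inj_on f A" "f ` A \<subseteq> A" "x \<in> A"
  obtains p where "0 < p" "(f ^^ p) x = x"
proof -
  define g where "g u = (if u \<in> A then f u else u)" for u
  have "inj g"
    using assms(2,3) unfolding g_def inj_def inj_on_def by (auto split: if_splits)
  have orbit: "(g ^^ n) x = (f ^^ n) x \<and> (f ^^ n) x \<in> A" for n
    using assms(3,4) by (induction n) (auto simp: g_def)
  then have "finite {u. \<exists>n. u = (g ^^ n) x}"
    using assms(1) by (auto intro: finite_subset)
  with \<open>inj g\<close> obtain p where "0 < p" "(g ^^ p) x = x"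
    by (rule funpow_inj_finite)
  with orbit that show thesis by metis
qed

lemma periodic_swap_cycles:
  assumes sk: "skew_type X R" and C: "cyclic_C X R"
    and k: "0 < k" and zX: "\<forall>i<k. z i \<in> X" and "y \<in> X" and "swap_cycle R y k z y'"
  obtains p w where "0 < p" "w 0 = y" "\<forall>j<p. w j \<in> X"
    "\<forall>j<p. swap_cycle R (w j) k z (w (Suc j mod p))"
proof -
  define \<rho> where "\<rho> u = snd (skew_swap R (u, z 0))" for u
  define A where "A = {u \<in> X. swap_cycle R u k z (\<rho> u)}"
  have swap_z0: "skew_swap R (u, z 0) = (z (Suc 0 mod k), c)" if "swap_cycle R u k z c" for u c
    using that k unfolding swap_cycle_def by simp
  have "y \<in> A"
    using assms(5,6) swap_z0 unfolding A_def \<rho>_def by force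
  have "\<rho> ` A \<subseteq> A"
  proof
    fix v assume "v \<in> \<rho> ` A"
    then obtain u where u: "u \<in> A" "v = \<rho> u" by blast
    have "skew_swap R (u, z 0) \<in> X \<times> X"
      using skew_swap_mem[OF sk] zX k u unfolding A_def by simp
    then have "v \<in> X"
      unfolding u \<rho>_def by (simp add: mem_Times_iff)
    with u show "v \<in> A"
      using swap_cycle_next[OF sk C k zX] unfolding A_def \<rho>_def by blast
  qed
  have "inj_on \<rho> A"
  proof (rule inj_onI)
    fix u v assume "u \<in> A" "v \<in> A" "\<rho> u = \<rho> v"
    then have "skew_swap R (u, z 0) = skew_swap R (v, z 0)"
      using swap_z0 unfolding A_def by auto
    then show "u = v"
      using skew_swap_skew_swap[OF sk] by (metis fst_conv)
  qed
  obtain p where "0 < p" "(\<rho> ^^ p) y = y"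
    using funpow_periodic_if_inj_on[OF _ \<open>inj_on \<rho> A\<close> \<open>\<rho> ` A \<subseteq> A\<close> \<open>y \<in> A\<close>] sk
    unfolding A_def skew_type_def by auto
  moreover have "(\<rho> ^^ j) y \<in> A" for j
    using \<open>y \<in> A\<close> \<open>\<rho> ` A \<subseteq> A\<close> by (induction j) auto
  moreover have "(\<rho> ^^ (Suc j mod p)) y = \<rho> ((\<rho> ^^ j) y)" for j
    using funpow_mod_eq[OF \<open>(\<rho> ^^ p) y = y\<close>] by simp
  ultimately show thesis
    using that[of p "\<lambda>j. (\<rho> ^^ j) y"] unfolding A_def by simp
qed

theorem proposition2p1:
  fixes X :: "'a set" and R :: "(('a \<times> 'a) \<times> ('a \<times> 'a)) set"
  assumes "skew_type X R" and "cyclic_C X R"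
  shows "full_cyclic_FC X R"
  unfolding full_cyclic_FC_def
proof (intro ballI)
  fix x y assume "x \<in> X" "y \<in> X"
  obtain k z y' where k: "0 < k" and "z 0 = x" and zX: "\<forall>i<k. z i \<in> X"
    and "swap_cycle R y k z y'"
    using cyclic_C_swap_cycle[OF assms \<open>x \<in> X\<close> \<open>y \<in> X\<close>] .
  obtain p w where "0 < p" "w 0 = y" "\<forall>j<p. w j \<in> X"
    and cycles: "\<forall>j<p. swap_cycle R (w j) k z (w (Suc j mod p))"
    using periodic_swap_cycles[OF assms k zX \<open>y \<in> X\<close> \<open>swap_cycle R y k z y'\<close>] .
  have "\<forall>i<k. \<forall>j<p. pres_eq R [w j, z i] [z (Suc i mod k), w (Suc j mod p)]"
    using cycles pres_eq_pair_iff[OF assms(1)] unfolding swap_cycle_def by simp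
  with k \<open>0 < p\<close> \<open>z 0 = x\<close> \<open>w 0 = y\<close> zX \<open>\<forall>j<p. w j \<in> X\<close>
  show "\<exists>k p z w. k \<ge> 1 \<and> p \<ge> 1 \<and> z 0 = x \<and> w 0 = y \<and> (\<forall>i<k. z i \<in> X) \<and> (\<forall>j<p. w j \<in> X) \<and>
      (\<forall>i<k. \<forall>j<p. pres_eq R [w j, z i] [z (Suc i mod k), w (Suc j mod p)])"
    by (intro exI[where x = k] exI[where x = p] exI[where x = z] exI[where x = w]) simp
qed

end
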